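(* Let $A_J=k\langle x_1,x_2\rangle/(x_2x_1-x_1x_2-x_1^2)$ (the Jordan plane) and let $K$ be a Hopf algebra with bijective antipode such that $A_J$ is a right $K$-comodule algebra via $\rho(x_i)=x_1\otimes a_{1i}+x_2\otimes a_{2i}$ ($i=1,2$). Let ${\sf D}$ be the homological codeterminant of this coaction. Then $$a_{12}a_{11}-a_{11}a_{12}-a_{11}^2=-{\sf D},\quad a_{12}a_{21}-a_{11}a_{22}-a_{11}a_{21}=-{\sf D},$$ $$a_{22}a_{11}-a_{21}a_{12}-a_{21}a_{11}={\sf D},\quad a_{22}a_{21}-a_{21}a_{22}-a_{21}^2=0.$$
   Context: $A_J$ is a Koszul AS regular algebra of global dimension 2; its Ext-algebra $E$ (with $E_1=(A_1)^*$, dual basis $x_1^*,x_2^*$, and one-dimensional $E_2$ spanned by $\mathfrak e$) is a left $K$-comodule algebra via $\rho^!(x_i^* )=\sum_s a_{is}\otimes x_s^*$. The homological codeterminant is the grouplike ${\sf D}\in K$ with $\rho^!(\mathfrak e)={\sf D}\otimes\mathfrak e$. *)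

theory Defs
  imports Main "HOL-Library.Function_Algebras"
begin

text \<open>Every vector space over a field k has a basis; a vector space with basis indexed by
  a type 'c is modelled by the finitely supported functions 'c => k.  Tensor products of such
  spaces are the finitely supported functions on the product of the basis types.\<close>

definition fsupp :: "('c \<Rightarrow> 'k::zero) \<Rightarrow> 'c set" where
  "fsupp u = {x. u x \<noteq> 0}"

definition finsupp :: "('c \<Rightarrow> 'k::zero) \<Rightarrow> bool" where
  "finsupp u \<longleftrightarrow> finite (fsupp u)"

definition ind :: "'c \<Rightarrow> 'c \<Rightarrow> 'k::{zero,one}" where
  "ind x = (\<lambda>y. if y = x then 1 else 0)"

definition smul :: "'k::times \<Rightarrow> ('c \<Rightarrow> 'k) \<Rightarrow> 'c \<Rightarrow> 'k" where
  "smul c u = (\<lambda>x. c * u x)"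

definition lext :: "('c \<Rightarrow> 'd \<Rightarrow> 'k::comm_semiring_1) \<Rightarrow> ('c \<Rightarrow> 'k) \<Rightarrow> 'd \<Rightarrow> 'k" where
  "lext g u = (\<lambda>y. \<Sum>x\<in>fsupp u. u x * g x y)"

definition lfun :: "('c \<Rightarrow> 'k::comm_semiring_1) \<Rightarrow> ('c \<Rightarrow> 'k) \<Rightarrow> 'k" where
  "lfun g u = (\<Sum>x\<in>fsupp u. u x * g x)"

text \<open>bilinear extension of a map given on pairs of basis vectors (structure constants)\<close>
definition bilext :: "('c \<Rightarrow> 'd \<Rightarrow> 'e \<Rightarrow> 'k::comm_semiring_1) \<Rightarrow> ('c \<Rightarrow> 'k) \<Rightarrow> ('d \<Rightarrow> 'k) \<Rightarrow> 'e \<Rightarrow> 'k" where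
  "bilext m u v = (\<lambda>z. \<Sum>x\<in>fsupp u. \<Sum>y\<in>fsupp v. u x * v y * m x y z)"

definition tens :: "('c \<Rightarrow> 'k::times) \<Rightarrow> ('d \<Rightarrow> 'k) \<Rightarrow> 'c \<times> 'd \<Rightarrow> 'k" where
  "tens u v = (\<lambda>(x, y). u x * v y)"

text \<open>structure constants of the tensor product algebra K \<otimes> K\<close>
definition mu2 :: "('b \<Rightarrow> 'b \<Rightarrow> 'b \<Rightarrow> 'k::times) \<Rightarrow> 'b \<times> 'b \<Rightarrow> 'b \<times> 'b \<Rightarrow> 'b \<times> 'b \<Rightarrow> 'k" where
  "mu2 mu = (\<lambda>(x1, y1) (x2, y2) (z, w). mu x1 x2 z * mu y1 y2 w)"

text \<open>K = finitely supported functions 'b => k; multiplication with structure constants mu,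
  unit un, comultiplication delta (on basis vectors), counit eps (on basis vectors),
  antipode S (on basis vectors).\<close>

definition is_algebra :: "('b \<Rightarrow> 'b \<Rightarrow> 'b \<Rightarrow> 'k::field) \<Rightarrow> ('b \<Rightarrow> 'k) \<Rightarrow> bool" where
  "is_algebra mu un \<longleftrightarrow>
     (\<forall>x y. finsupp (mu x y)) \<and> finsupp un \<and>
     (\<forall>u v w. finsupp u \<longrightarrow> finsupp v \<longrightarrow> finsupp w \<longrightarrow>
        bilext mu (bilext mu u v) w = bilext mu u (bilext mu v w)) \<and>
     (\<forall>u. finsupp u \<longrightarrow> bilext mu un u = u \<and> bilext mu u un = u)"

definition is_coalgebra :: "('b \<Rightarrow> 'b \<times> 'b \<Rightarrow> 'k::field) \<Rightarrow> ('b \<Rightarrow> 'k) \<Rightarrow> bool" where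
  "is_coalgebra delta eps \<longleftrightarrow>
     (\<forall>x. finsupp (delta x)) \<and>
     (\<forall>x p q r.
        lext (\<lambda>(y, z). tens (delta y) (ind z)) (delta x) ((p, q), r)
      = lext (\<lambda>(y, z). tens (ind y) (delta z)) (delta x) (p, (q, r))) \<and>
     (\<forall>x. lext (\<lambda>(y, z). smul (eps y) (ind z)) (delta x) = ind x \<and>
          lext (\<lambda>(y, z). smul (eps z) (ind y)) (delta x) = ind x)"

definition is_hopf_bij ::
  "('b \<Rightarrow> 'b \<Rightarrow> 'b \<Rightarrow> 'k::field) \<Rightarrow> ('b \<Rightarrow> 'k) \<Rightarrow> ('b \<Rightarrow> 'b \<times> 'b \<Rightarrow> 'k) \<Rightarrow> ('b \<Rightarrow> 'k)
     \<Rightarrow> ('b \<Rightarrow> 'b \<Rightarrow> 'k) \<Rightarrow> bool" where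
  "is_hopf_bij mu un delta eps S \<longleftrightarrow>
     is_algebra mu un \<and> is_coalgebra delta eps \<and>
     \<comment> \<open>bialgebra: comultiplication and counit are algebra maps\<close>
     (\<forall>u v. finsupp u \<longrightarrow> finsupp v \<longrightarrow>
        lext delta (bilext mu u v) = bilext (mu2 mu) (lext delta u) (lext delta v) \<and>
        lfun eps (bilext mu u v) = lfun eps u * lfun eps v) \<and>
     lext delta un = tens un un \<and> lfun eps un = 1 \<and>
     \<comment> \<open>antipode\<close>
     (\<forall>x. finsupp (S x)) \<and>
     (\<forall>x. lext (\<lambda>(y, z). bilext mu (S y) (ind z)) (delta x) = smul (eps x) un \<and>
          lext (\<lambda>(y, z). bilext mu (ind y) (S z)) (delta x) = smul (eps x) un) \<and>
     \<comment> \<open>bijective antipode\<close>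
     bij_betw (lext S) {u. finsupp u} {u. finsupp u}"

text \<open>Coefficients of the relation r = x2 x1 - x1 x2 - x1^2 of A_J = k<x1,x2>/(r):
  r = sum over s t in {1,2} of jr s t * x_s x_t.\<close>
definition jr :: "nat \<Rightarrow> nat \<Rightarrow> 'k::ring_1" where
  "jr s t = (if s = 2 \<and> t = 1 then 1 else if s = 1 \<and> t = 2 then -1
             else if s = 1 \<and> t = 1 then -1 else 0)"

text \<open>A_J is a right K-comodule algebra via rho(x_i) = x_1 \<otimes> a 1 i + x_2 \<otimes> a 2 i.
  Since all maps involved are algebra maps, this amounts to: coassociativity and counitality
  on generators, and rho (extended to the free algebra) sending the relation r into
  (r) \<otimes> K, i.e. in degree 2: rho(r) = r \<otimes> lam for some lam in K, where
  rho(r) = sum_{i,j} x_i x_j \<otimes> (sum_{s,t} jr s t * a i s * a j t).\<close>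
definition jordan_coaction ::
  "('b \<Rightarrow> 'b \<Rightarrow> 'b \<Rightarrow> 'k::field) \<Rightarrow> ('b \<Rightarrow> 'b \<times> 'b \<Rightarrow> 'k) \<Rightarrow> ('b \<Rightarrow> 'k)
     \<Rightarrow> (nat \<Rightarrow> nat \<Rightarrow> 'b \<Rightarrow> 'k) \<Rightarrow> bool" where
  "jordan_coaction mu delta eps a \<longleftrightarrow>
     (\<forall>i\<in>{1,2}. \<forall>j\<in>{1,2}. finsupp (a i j)) \<and>
     (\<forall>l\<in>{1,2}. \<forall>i\<in>{1,2}. lext delta (a l i) = (\<Sum>j\<in>{1,2}. tens (a l j) (a j i))) \<and>
     (\<forall>l\<in>{1,2}. \<forall>i\<in>{1,2}. lfun eps (a l i) = (if l = i then 1 else 0)) \<and>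
     (\<exists>lam. finsupp lam \<and>
        (\<forall>i\<in>{1,2}. \<forall>j\<in>{1,2}.
           (\<Sum>s\<in>{1,2}. \<Sum>t\<in>{1,2}. smul (jr s t) (bilext mu (a i s) (a j t))) = smul (jr i j) lam))"

text \<open>Degree-2 part of the Ext-algebra E = A_J^! (Koszul dual):
  E_2 = (A_1^* \<otimes> A_1^*) / R^\<perp>, where R = k r.  An element f of A_1^* \<otimes> A_1^*
  (f = sum f i j x_i^* x_j^*) is sent to its class, identified with the scalar <f, r>
  (using the pairing <x_i^* x_j^*, x_s x_t> = \<delta>_is \<delta>_jt); this identifies E_2 with k.\<close>
definition e2class :: "(nat \<Rightarrow> nat \<Rightarrow> 'k::ring_1) \<Rightarrow> 'k" where
  "e2class f = (\<Sum>i\<in>{1,2}. \<Sum>j\<in>{1,2}. f i j * jr i j)"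

text \<open>The left coaction rho^!(x_i^*) = sum_s a i s \<otimes> x_s^*, extended multiplicatively to
  A_1^* \<otimes> A_1^*: rho^!(x_i^* x_j^*) = sum_{s,t} a i s a j t \<otimes> x_s^* x_t^*.
  Result: coefficient (in K) of x_s^* x_t^*.\<close>
definition rho_shriek2 ::
  "('b \<Rightarrow> 'b \<Rightarrow> 'b \<Rightarrow> 'k::field) \<Rightarrow> (nat \<Rightarrow> nat \<Rightarrow> 'b \<Rightarrow> 'k) \<Rightarrow> (nat \<Rightarrow> nat \<Rightarrow> 'k)
     \<Rightarrow> nat \<Rightarrow> nat \<Rightarrow> 'b \<Rightarrow> 'k" where
  "rho_shriek2 mu a f s t = (\<Sum>i\<in>{1,2}. \<Sum>j\<in>{1,2}. smul (f i j) (bilext mu (a i s) (a j t)))"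

text \<open>(id_K \<otimes> projection to E_2 = k) applied to an element of K \<otimes> (A_1^* \<otimes> A_1^*).\<close>
definition proj_E2 :: "(nat \<Rightarrow> nat \<Rightarrow> 'b \<Rightarrow> 'k::field) \<Rightarrow> 'b \<Rightarrow> 'k" where
  "proj_E2 g = (\<Sum>s\<in>{1,2}. \<Sum>t\<in>{1,2}. smul (jr s t) (g s t))"

text \<open>D is the homological codeterminant: rho^!(e) = D \<otimes> e for a spanning element e of E_2
  (e = class of some f with nonzero class).\<close>
definition hom_codet ::
  "('b \<Rightarrow> 'b \<Rightarrow> 'b \<Rightarrow> 'k::field) \<Rightarrow> (nat \<Rightarrow> nat \<Rightarrow> 'b \<Rightarrow> 'k) \<Rightarrow> ('b \<Rightarrow> 'k) \<Rightarrow> bool" where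
  "hom_codet mu a D \<longleftrightarrow> finsupp D \<and>
     (\<exists>f. e2class f \<noteq> 0 \<and> proj_E2 (rho_shriek2 mu a f) = smul (e2class f) D)"

end

theory Submission
  imports Defs
begin

text \<open>
  Write rho(r) = sum_{i,j} x_i x_j \<otimes> R i j for the image of the defining
  relation r = x2 x1 - x1 x2 - x1^2 of the Jordan plane, so that
  R i j = a i 2 a j 1 - a i 1 a j 2 - a i 1 a j 1.  Being a comodule algebra forces
  rho(r) = r \<otimes> lam for some lam in K, i.e. R i j = jr i j * lam.  On the dual side,
  the coaction of E on a degree-2 element f, followed by the projection to E_2 = k,
  is the pairing of f with the matrix R; hence it equals <f, r> lam = e2class f * lam.
  Comparing with the defining property of the homological codeterminant (and cancelling
  the nonzero scalar e2class f) gives D = lam, and the four identities of the theorem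
  are the four entries R i j = jr i j * D.
\<close>

text \<open>The coefficient in K of x_i x_j in rho(r), where rho is extended multiplicatively.\<close>
definition rel_image :: "('b \<Rightarrow> 'b \<Rightarrow> 'b \<Rightarrow> 'k::field) \<Rightarrow> (nat \<Rightarrow> nat \<Rightarrow> 'b \<Rightarrow> 'k) \<Rightarrow> nat \<Rightarrow> nat \<Rightarrow> 'b \<Rightarrow> 'k"
  where "rel_image mu a i j = (\<Sum>s\<in>{1,2}. \<Sum>t\<in>{1,2}. smul (jr s t) (bilext mu (a i s) (a j t)))"

lemma rel_image_explicit:
  "rel_image mu a i j =
     bilext mu (a i 2) (a j 1) - bilext mu (a i 1) (a j 2) - bilext mu (a i 1) (a j 1)"
  by (simp add: rel_image_def jr_def smul_def fun_eq_iff)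

lemma jordan_coaction_rel_image:
  assumes "jordan_coaction mu delta eps a"
  obtains lam where "\<And>i j. i \<in> {1,2} \<Longrightarrow> j \<in> {1,2} \<Longrightarrow> rel_image mu a i j = smul (jr i j) lam"
proof -
  from assms obtain lam where "\<forall>i\<in>{1,2}. \<forall>j\<in>{1,2}. rel_image mu a i j = smul (jr i j) lam"
    unfolding jordan_coaction_def rel_image_def by blast
  then show ?thesis using that by blast
qed

lemma proj_E2_rho_shriek2:
  "proj_E2 (rho_shriek2 mu a f) = (\<Sum>i\<in>{1,2}. \<Sum>j\<in>{1,2}. smul (f i j) (rel_image mu a i j))"
  by (simp add: proj_E2_def rho_shriek2_def rel_image_def smul_def fun_eq_iff algebra_simps)

lemma proj_E2_rho_shriek2_scalar:
  assumes "\<And>i j. i \<in> {1,2} \<Longrightarrow> j \<in> {1,2} \<Longrightarrow> rel_image mu a i j = smul (jr i j) lam"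
  shows "proj_E2 (rho_shriek2 mu a f) = smul (e2class f) lam"
proof -
  have "proj_E2 (rho_shriek2 mu a f) = (\<Sum>i\<in>{1,2}. \<Sum>j\<in>{1,2}. smul (f i j) (smul (jr i j) lam))"
    by (simp add: proj_E2_rho_shriek2 assms)
  also have "\<dots> = smul (e2class f) lam"
    by (simp add: e2class_def smul_def fun_eq_iff algebra_simps)
  finally show ?thesis .
qed

lemma smul_cancel:
  fixes c :: "'k::field"
  assumes "c \<noteq> 0" and "smul c u = smul c v"
  shows "u = v"
proof
  fix x
  from assms(2) have "smul c u x = smul c v x" by simp
  then have "c * u x = c * v x" by (simp add: smul_def)
  with assms(1) show "u x = v x" by simp
qed

lemma hom_codet_eq_rel_scalar:
  assumes "hom_codet mu a D"
    and "\<And>i j. i \<in> {1,2} \<Longrightarrow> j \<in> {1,2} \<Longrightarrow> rel_image mu a i j = smul (jr i j) lam"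
  shows "D = lam"
proof -
  obtain f where "e2class f \<noteq> 0" and "proj_E2 (rho_shriek2 mu a f) = smul (e2class f) D"
    using assms(1) unfolding hom_codet_def by blast
  moreover have "proj_E2 (rho_shriek2 mu a f) = smul (e2class f) lam"
    using assms(2) by (rule proj_E2_rho_shriek2_scalar)
  ultimately show ?thesis by (metis smul_cancel)
qed

theorem lemma5p6:
  fixes mu :: "'b \<Rightarrow> 'b \<Rightarrow> 'b \<Rightarrow> 'k::field"
    and un :: "'b \<Rightarrow> 'k" and delta :: "'b \<Rightarrow> 'b \<times> 'b \<Rightarrow> 'k" and eps :: "'b \<Rightarrow> 'k"
    and S :: "'b \<Rightarrow> 'b \<Rightarrow> 'k" and a :: "nat \<Rightarrow> nat \<Rightarrow> 'b \<Rightarrow> 'k" and D :: "'b \<Rightarrow> 'k"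
  assumes "is_hopf_bij mu un delta eps S"
    and "jordan_coaction mu delta eps a"
    and "hom_codet mu a D"
  shows "bilext mu (a 1 2) (a 1 1) - bilext mu (a 1 1) (a 1 2) - bilext mu (a 1 1) (a 1 1) = - D \<and>
         bilext mu (a 1 2) (a 2 1) - bilext mu (a 1 1) (a 2 2) - bilext mu (a 1 1) (a 2 1) = - D \<and>
         bilext mu (a 2 2) (a 1 1) - bilext mu (a 2 1) (a 1 2) - bilext mu (a 2 1) (a 1 1) = D \<and>
         bilext mu (a 2 2) (a 2 1) - bilext mu (a 2 1) (a 2 2) - bilext mu (a 2 1) (a 2 1) = 0"
proof -
  obtain lam where rel: "\<And>i j. i \<in> {1,2} \<Longrightarrow> j \<in> {1,2} \<Longrightarrow> rel_image mu a i j = smul (jr i j) lam"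
    using jordan_coaction_rel_image[OF assms(2)] by blast
  have "D = lam"
    using assms(3) rel by (rule hom_codet_eq_rel_scalar)
  then have "\<And>i j. i \<in> {1,2} \<Longrightarrow> j \<in> {1,2} \<Longrightarrow>
      bilext mu (a i 2) (a j 1) - bilext mu (a i 1) (a j 2) - bilext mu (a i 1) (a j 1) = smul (jr i j) D"
    using rel by (simp add: rel_image_explicit)
  from this[of 1 1] this[of 1 2] this[of 2 1] this[of 2 2] show ?thesis
    by (simp add: jr_def smul_def fun_eq_iff)
qed

end
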